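(* For $r>0$ let $F_r(x)=\min\{x^r,1\}$ for $x\ge 0$. Then \[\lim_{r\to 0^+}\frac{\mathbb{E}_{p\sim F_r}[\mathsf{W}(p,F_r)]}{\mathsf{OPT\text{-}W}(F_r)}=\frac34 .\] Consequently the constant $3/4$ in the bound $\mathbb{E}_{p\sim F}[\mathsf{W}(p,F)]\ge \frac34\mathsf{OPT\text{-}W}(F)$ (valid for all continuous $F$ on $[0,\infty)$ with finite positive mean) cannot be improved.
   Context: Symmetric bilateral trade: $B,S$ i.i.d. with distribution $F$; price $p\sim F$ drawn independently. Trade occurs iff $B\ge p>S$. $\mathsf{W}(p,F)=\mathbb{E}[S]+\mathbb{E}[(B-S)\mathbf 1_{B\ge p>S}]$, $\mathsf{OPT\text{-}W}(F)=\mathbb{E}[\max\{B,S\}]$. *)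

theory Defs
  imports "HOL-Analysis.Analysis"
begin

definition dist_of_cdf :: "(real \<Rightarrow> real) \<Rightarrow> real measure" where
  "dist_of_cdf F = interval_measure F"

text \<open>Welfare at posted price p when B, S are i.i.d. with law M:
  E[S] + E[(B - S) 1(B \<ge> p > S)].\<close>
definition W :: "real \<Rightarrow> real measure \<Rightarrow> real" where
  "W p M = (\<integral>s. s \<partial>M) +
     (\<integral>b. (\<integral>s. (b - s) * (if b \<ge> p \<and> p > s then 1 else 0) \<partial>M) \<partial>M)"

definition EW :: "real measure \<Rightarrow> real" where
  "EW M = (\<integral>p. W p M \<partial>M)"

definition OPT_W :: "real measure \<Rightarrow> real" where
  "OPT_W M = (\<integral>b. (\<integral>s. max b s \<partial>M) \<partial>M)"

definition F_r :: "real \<Rightarrow> real \<Rightarrow> real" where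
  "F_r r x = (if x \<le> 0 then 0 else min (x powr r) 1)"

end

theory Submission
  imports Defs "HOL-Probability.Probability"
begin

(* The distribution with CDF F_r is the law of U^a, a = 1/r, for U uniform on [0,1], so every
  expectation becomes an integral over [0,1] of powers of the uniform variable.  This gives
  E[X] = 1/(a+1), OPT-W = 2/(a+2) and E_p[W(p)] = (3/2 - 1/(a+2))/(a+1), hence the ratio
  (3 + 4r)/(4(1 + r)), which tends to 3/4 as r -> 0 and is arbitrarily close to it for small r. *)

lemma powr_mono2_iff:
  fixes a x y :: real
  assumes "a > 0" "0 \<le> x" "0 \<le> y"
  shows "x powr a \<le> y powr a \<longleftrightarrow> x \<le> y"
  using assms powr_mono2[of a x y] powr_less_mono2[of a y x] by force

lemma powr_less_mono2_iff:
  fixes a x y :: real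
  assumes "a > 0" "0 \<le> x" "0 \<le> y"
  shows "x powr a < y powr a \<longleftrightarrow> x < y"
  using powr_mono2_iff[OF assms(1,3,2)] by auto

lemma has_integral_powr_interval:
  fixes c x y :: real
  assumes "c > -1" "0 \<le> x" "x \<le> y"
  shows "((\<lambda>t. t powr c) has_integral (y powr (c+1) - x powr (c+1)) / (c+1)) {x..y}"
proof -
  have to_y: "((\<lambda>t. t powr c) has_integral y powr (c+1) / (c+1)) {0..y}"
    and to_x: "((\<lambda>t. t powr c) has_integral x powr (c+1) / (c+1)) {0..x}"
    using has_integral_powr_from_0 assms by auto
  obtain J where J: "((\<lambda>t. t powr c) has_integral J) {x..y}"
    using integrable_subinterval_real[OF has_integral_integrable[OF to_y], of x y] assms by auto
  have "((\<lambda>t. t powr c) has_integral x powr (c+1) / (c+1) + J) {0..y}"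
    using has_integral_combine[OF assms(2,3) to_x J] .
  then have "J = (y powr (c+1) - x powr (c+1)) / (c+1)"
    using has_integral_unique[OF to_y] by (simp add: diff_divide_distrib)
  with J show ?thesis by simp
qed

lemma set_integral_powr_affine:
  fixes c x y \<alpha> \<beta> \<gamma> :: real
  assumes "c > 0" "0 \<le> x" "x \<le> y"
  shows "(LINT t:{x..y}|lborel. \<alpha> * t powr c + \<beta> * t + \<gamma>) =
    \<alpha> * (y powr (c+1) - x powr (c+1)) / (c+1) + \<beta> * (y\<^sup>2 - x\<^sup>2) / 2 + \<gamma> * (y - x)"
proof -
  have "continuous_on {x..y} (\<lambda>t. \<alpha> * t powr c + \<beta> * t + \<gamma>)"
    by (intro continuous_intros continuous_on_powr') (use assms in auto)
  then have "(LINT t:{x..y}|lborel. \<alpha> * t powr c + \<beta> * t + \<gamma>) =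
      integral {x..y} (\<lambda>t. \<alpha> * t powr c + \<beta> * t + \<gamma>)"
    by (intro set_borel_integral_eq_integral(2) borel_integrable_atLeastAtMost')
  also have "\<dots> = \<alpha> * (y powr (c+1) - x powr (c+1)) / (c+1) + \<beta> * (y\<^sup>2 - x\<^sup>2) / 2 + \<gamma> * (y - x)"
  proof (intro integral_unique has_integral_add)
    show "((\<lambda>t. \<alpha> * t powr c) has_integral \<alpha> * (y powr (c+1) - x powr (c+1)) / (c+1)) {x..y}"
      using has_integral_mult_right[OF has_integral_powr_interval, of c x y \<alpha>] assms by simp
    show "((\<lambda>t. \<beta> * t) has_integral \<beta> * (y\<^sup>2 - x\<^sup>2) / 2) {x..y}"
      using has_integral_mult_right[OF ident_has_integral, of x y \<beta>] assms by simp
    show "((\<lambda>t. \<gamma>) has_integral \<gamma> * (y - x)) {x..y}"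
      using has_integral_const_real[of \<gamma> x y] assms by (simp add: mult.commute)
  qed
  finally show ?thesis .
qed

lemma set_integral_max_powr:
  fixes a u :: real
  assumes "a > 0" "0 \<le> u" "u \<le> 1"
  shows "(LINT v:{0..1}|lborel. max u v powr a) = a / (a+1) * u powr (a+1) + 1 / (a+1)"
proof -
  have "continuous_on {0..1} (\<lambda>v. max u v powr a)"
    by (intro continuous_intros continuous_on_powr') (use assms in auto)
  then have "(LINT v:{0..1}|lborel. max u v powr a) = integral {0..1} (\<lambda>v. max u v powr a)"
    by (intro set_borel_integral_eq_integral(2) borel_integrable_atLeastAtMost')
  also have "\<dots> = u * u powr a + (1 - u powr (a+1)) / (a+1)"
  proof (rule integral_unique, rule has_integral_combine[OF assms(2,3)])
    show "((\<lambda>v. max u v powr a) has_integral u * u powr a) {0..u}"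
      using has_integral_const_real[of "u powr a" 0 u] assms
      by (subst has_integral_cong[where g="\<lambda>_. u powr a"]) (auto simp: mult.commute)
    show "((\<lambda>v. max u v powr a) has_integral (1 - u powr (a+1)) / (a+1)) {u..1}"
      using has_integral_powr_interval[of a u 1] assms
      by (subst has_integral_cong[where g="\<lambda>v. v powr a"]) auto
  qed
  also have "\<dots> = a / (a+1) * u powr (a+1) + 1 / (a+1)"
    using assms by (simp add: powr_add field_simps)
  finally show ?thesis .
qed

lemma set_integral_if_less:
  fixes g :: "real \<Rightarrow> real"
  assumes [measurable]: "g \<in> borel_measurable borel" and "a \<le> w" "w \<le> b"
  shows "(LINT v:{a..b}|lborel. if v < w then g v else 0) = (LINT v:{a..w}|lborel. g v)"
  unfolding set_lebesgue_integral_def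
proof (rule integral_cong_AE)
  show "AE v in lborel. indicator {a..b} v *\<^sub>R (if v < w then g v else 0) = indicator {a..w} v *\<^sub>R g v"
    using AE_lborel_singleton[of w] by eventually_elim (use assms in \<open>auto simp: indicator_def\<close>)
qed auto

lemma set_integral_if_ge:
  fixes g :: "real \<Rightarrow> real"
  assumes "a \<le> w"
  shows "(LINT v:{a..b}|lborel. if w \<le> v then g v else 0) = (LINT v:{w..b}|lborel. g v)"
  unfolding set_lebesgue_integral_def
  by (rule Bochner_Integration.integral_cong) (use assms in \<open>auto simp: indicator_def\<close>)

lemma (in real_distribution) interval_measure_cdf: "interval_measure (cdf M) = M"
proof (rule cdf_unique)
  show "real_distribution (interval_measure (cdf M))"
    by (rule real_distribution_interval_measure)
       (auto simp: cdf_nondecreasing cdf_is_right_cont cdf_lim_at_bot cdf_lim_at_top_prob)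
  show "cdf (interval_measure (cdf M)) = cdf M"
    by (rule cdf_interval_measure) (auto simp: cdf_nondecreasing cdf_is_right_cont cdf_lim_at_bot)
qed unfold_locales

lemma uniform_measure_unit_interval:
  "uniform_measure lborel {0..1::real} = density lborel (\<lambda>x. ennreal (indicator {0..1} x))"
  by (simp add: uniform_measure_def divide_ennreal_def ennreal_indicator)

definition power_law :: "real \<Rightarrow> real measure" where
  "power_law a = distr (uniform_measure lborel {0..1}) borel (\<lambda>t. t powr a)"

lemma sets_power_law [simp, measurable_cong]: "sets (power_law a) = sets borel"
  and space_power_law [simp]: "space (power_law a) = UNIV"
  by (simp_all add: power_law_def)

lemma integral_power_law:
  fixes f :: "real \<Rightarrow> real"
  assumes [measurable]: "f \<in> borel_measurable borel"
  shows "(\<integral>x. f x \<partial>power_law a) = (LINT t:{0..1}|lborel. f (t powr a))"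
  unfolding power_law_def set_lebesgue_integral_def
  by (simp add: integral_distr uniform_measure_unit_interval integral_density)

lemma real_distribution_power_law: "real_distribution (power_law a)"
proof -
  interpret prob_space "uniform_measure lborel {0..1::real}"
    by (rule prob_space_uniform_measure) auto
  show ?thesis unfolding power_law_def by (rule real_distribution_distr) simp
qed

lemma cdf_power_law:
  assumes "r > 0"
  shows "cdf (power_law (1/r)) = F_r r"
proof
  fix x
  have "cdf (power_law (1/r)) x = measure lborel ({0..1} \<inter> {t. t powr (1/r) \<le> x})"
    by (simp add: cdf_def power_law_def measure_distr vimage_def)
  also have "\<dots> = F_r r x"
  proof (cases "x > 0")
    case True
    have "t powr (1/r) \<le> x \<longleftrightarrow> t \<le> x powr r" if "t \<ge> 0" for t
      using powr_mono2_iff[of r "t powr (1/r)" x] that True assms by (simp add: powr_powr)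
    then have "{0..1} \<inter> {t. t powr (1/r) \<le> x} = {0..min (x powr r) 1}"
      by auto
    then show ?thesis using True by (simp add: F_r_def)
  next
    case False
    then have "{0..1} \<inter> {t. t powr (1/r) \<le> x} \<subseteq> {0}"
      by auto (meson not_le order.strict_trans1 powr_gt_zero)
    then have "countable ({0..1} \<inter> {t. t powr (1/r) \<le> x})"
      by (rule countable_subset) simp
    then show ?thesis using False by (simp add: measure_def emeasure_lborel_countable F_r_def)
  qed
  finally show "cdf (power_law (1/r)) x = F_r r x" .
qed

lemma mean_power_law:
  assumes "a > 0"
  shows "(\<integral>s. s \<partial>power_law a) = 1 / (a+1)"
proof -
  have "(\<integral>s. s \<partial>power_law a) = (LINT t:{0..1}|lborel. 1 * t powr a + 0 * t + 0)"
    by (simp add: integral_power_law)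
  also have "\<dots> = 1 / (a+1)"
    using assms by (subst set_integral_powr_affine) auto
  finally show ?thesis .
qed

lemma OPT_W_power_law:
  assumes "a > 0"
  shows "OPT_W (power_law a) = 2 / (a+2)"
proof -
  interpret real_distribution "power_law a" by (rule real_distribution_power_law)
  have inner: "(\<integral>s. max (u powr a) s \<partial>power_law a) = a / (a+1) * u powr (a+1) + 1 / (a+1)"
    if "0 \<le> u" "u \<le> 1" for u
  proof -
    have "(\<integral>s. max (u powr a) s \<partial>power_law a) = (LINT v:{0..1}|lborel. max u v powr a)"
      using that assms
      by (auto simp: integral_power_law max_def powr_mono2_iff intro!: set_lebesgue_integral_cong)
    then show ?thesis
      using set_integral_max_powr[OF assms that] by simp
  qed
  have "OPT_W (power_law a) = (LINT u:{0..1}|lborel. \<integral>s. max (u powr a) s \<partial>power_law a)"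
    unfolding OPT_W_def by (subst integral_power_law) (auto intro: borel_measurable_lebesgue_integral)
  also have "\<dots> = (LINT u:{0..1}|lborel. a / (a+1) * u powr (a+1) + 0 * u + 1 / (a+1))"
    by (rule set_lebesgue_integral_cong) (auto simp: inner)
  also have "\<dots> = a / (a+1) / (a+2) + 1 / (a+1)"
    using assms by (subst set_integral_powr_affine) (auto simp: add.assoc)
  also have "\<dots> = 2 / (a+2)"
  proof -
    have "a + 1 \<noteq> 0" "a + 2 \<noteq> 0" using assms by auto
    then show ?thesis by (simp add: divide_simps)
  qed
  finally show ?thesis .
qed

lemma trade_gain_power_law:
  assumes "a > 0" "0 \<le> u" "u \<le> 1" "0 \<le> w" "w \<le> 1"
  shows "(\<integral>s. (u powr a - s) * (if u powr a \<ge> w powr a \<and> w powr a > s then 1 else 0) \<partial>power_law a) =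
    (if w \<le> u then w * u powr a - w powr (a+1) / (a+1) else 0)"
proof (cases "w \<le> u")
  case False
  then show ?thesis using assms by (simp add: integral_power_law powr_mono2_iff)
next
  case True
  have "(\<integral>s. (u powr a - s) * (if u powr a \<ge> w powr a \<and> w powr a > s then 1 else 0) \<partial>power_law a) =
      (LINT v:{0..1}|lborel. if v < w then u powr a - v powr a else 0)"
    using assms True
    by (auto simp: integral_power_law powr_mono2_iff powr_less_mono2_iff
        intro!: set_lebesgue_integral_cong)
  also have "\<dots> = (LINT v:{0..w}|lborel. (-1) * v powr a + 0 * v + u powr a)"
    using assms by (subst set_integral_if_less) auto
  also have "\<dots> = w * u powr a - w powr (a+1) / (a+1)"
    using assms by (subst set_integral_powr_affine) (auto simp: algebra_simps)
  finally show ?thesis using True by simp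
qed

lemma W_power_law:
  assumes "a > 0" "0 \<le> w" "w \<le> 1"
  shows "W (w powr a) (power_law a) = (1 + w - w powr (a+1)) / (a+1)"
proof -
  interpret real_distribution "power_law a" by (rule real_distribution_power_law)
  have "(\<integral>b. (\<integral>s. (b - s) * (if b \<ge> w powr a \<and> w powr a > s then 1 else 0) \<partial>power_law a) \<partial>power_law a) =
      (LINT u:{0..1}|lborel. \<integral>s. (u powr a - s) * (if u powr a \<ge> w powr a \<and> w powr a > s then 1 else 0) \<partial>power_law a)"
    by (subst integral_power_law) (auto intro: borel_measurable_lebesgue_integral)
  also have "\<dots> = (LINT u:{0..1}|lborel. if w \<le> u then w * u powr a - w powr (a+1) / (a+1) else 0)"
    using assms by (intro set_lebesgue_integral_cong) (auto simp: trade_gain_power_law)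
  also have "\<dots> = (LINT u:{w..1}|lborel. w * u powr a + 0 * u + - (w powr (a+1) / (a+1)))"
    using assms by (subst set_integral_if_ge) auto
  also have "\<dots> = (w - w powr (a+1)) / (a+1)"
    using assms by (subst set_integral_powr_affine) (auto simp: diff_divide_distrib algebra_simps)
  finally show ?thesis
    unfolding W_def using assms by (simp add: mean_power_law) (simp add: add_divide_distrib diff_divide_distrib)
qed

lemma EW_power_law:
  assumes "a > 0"
  shows "EW (power_law a) = (3/2 - 1 / (a+2)) / (a+1)"
proof -
  interpret real_distribution "power_law a" by (rule real_distribution_power_law)
  have "EW (power_law a) = (LINT w:{0..1}|lborel. W (w powr a) (power_law a))"
    unfolding EW_def W_def
    by (subst integral_power_law) (auto intro: borel_measurable_lebesgue_integral)
  also have "\<dots> = (LINT w:{0..1}|lborel. (-1 / (a+1)) * w powr (a+1) + 1 / (a+1) * w + 1 / (a+1))"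
    using assms by (intro set_lebesgue_integral_cong) (auto simp: W_power_law diff_divide_distrib add_divide_distrib)
  also have "\<dots> = (3/2 - 1 / (a+2)) / (a+1)"
  proof -
    have "a + 1 \<noteq> 0" "a + 2 \<noteq> 0" using assms by auto
    then show ?thesis
      using assms by (subst set_integral_powr_affine) (simp_all add: divide_simps add.assoc, algebra)
  qed
  finally show ?thesis .
qed

lemma dist_of_cdf_F_r:
  assumes "r > 0"
  shows "dist_of_cdf (F_r r) = power_law (1/r)"
proof -
  interpret real_distribution "power_law (1/r)" by (rule real_distribution_power_law)
  show ?thesis
    unfolding dist_of_cdf_def cdf_power_law[OF assms, symmetric] by (rule interval_measure_cdf)
qed

lemma OPT_W_F_r_pos: "r > 0 \<Longrightarrow> OPT_W (dist_of_cdf (F_r r)) > 0"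
  by (simp add: dist_of_cdf_F_r OPT_W_power_law add_pos_pos)

lemma EW_div_OPT_W_F_r:
  assumes "r > 0"
  shows "EW (dist_of_cdf (F_r r)) / OPT_W (dist_of_cdf (F_r r)) = (3 + 4*r) / (4 * (1 + r))"
proof -
  have "1 + 2*r \<noteq> 0" "1 + r \<noteq> 0" using assms by auto
  then show ?thesis
    using assms by (simp add: dist_of_cdf_F_r EW_power_law OPT_W_power_law divide_simps) algebra
qed

theorem lemma3:
  shows "(((\<lambda>r. EW (dist_of_cdf (F_r r)) / OPT_W (dist_of_cdf (F_r r))) \<longlongrightarrow> 3 / 4) (at_right 0)) \<and>
    (\<forall>c > 3 / 4. \<exists>r > 0. EW (dist_of_cdf (F_r r)) < c * OPT_W (dist_of_cdf (F_r r)))"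
proof
  have "((\<lambda>r::real. (3 + 4*r) / (4 * (1 + r))) \<longlongrightarrow> (3 + 4*0) / (4 * (1 + 0))) (at_right 0)"
    by (intro tendsto_intros) auto
  moreover have "eventually (\<lambda>r. (3 + 4*r) / (4 * (1 + r)) =
      EW (dist_of_cdf (F_r r)) / OPT_W (dist_of_cdf (F_r r))) (at_right (0::real))"
    using eventually_at_right_less[of 0] by eventually_elim (simp add: EW_div_OPT_W_F_r)
  ultimately show lim: "((\<lambda>r. EW (dist_of_cdf (F_r r)) / OPT_W (dist_of_cdf (F_r r))) \<longlongrightarrow> 3 / 4) (at_right 0)"
    by (simp add: tendsto_cong)
  show "\<forall>c > 3 / 4. \<exists>r > 0. EW (dist_of_cdf (F_r r)) < c * OPT_W (dist_of_cdf (F_r r))"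
  proof (intro allI impI)
    fix c :: real
    assume "c > 3 / 4"
    with lim have "eventually (\<lambda>r. r > 0 \<and> EW (dist_of_cdf (F_r r)) / OPT_W (dist_of_cdf (F_r r)) < c) (at_right 0)"
      using eventually_at_right_less order_tendstoD(2) eventually_conj by blast
    then obtain r where "r > 0" "EW (dist_of_cdf (F_r r)) / OPT_W (dist_of_cdf (F_r r)) < c"
      using eventually_happens trivial_limit_at_right_real by blast
    then show "\<exists>r > 0. EW (dist_of_cdf (F_r r)) < c * OPT_W (dist_of_cdf (F_r r))"
      using OPT_W_F_r_pos by (auto simp: pos_divide_less_eq)
  qed
qed

end
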